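(* Let $g\geqslant1$ be odd and $i\geqslant0$ an integer. Then: (i) there exists $u_{g,i}\in\mathbb{C}[\alpha,\gamma]$ which is a unit modulo $J_g^-$ such that $u_{g,i}\gamma^i\zeta^-_{g-2i-1}\equiv\gamma^{i+1}\zeta^-_{g-2i-2}\pmod{J_g^-}$; (ii) there exists $v_{g,i}\in\mathbb{C}[\alpha,\gamma]$ which is a unit modulo $J_g^-$ such that $v_{g,i}\gamma^i\zeta^-_{g-2i-1}\equiv\gamma^{i+1}\zeta^-_{g-2i-3}\pmod{J_g^-}$.
   Context: $\zeta_k^-\in\mathbb{C}[\alpha,\gamma]$: $\zeta^-_i=0$ for $i<0$, $\zeta^-_0=1$, $\zeta^-_{k+1}=\alpha\zeta^-_k-16k^2\zeta^-_{k-1}+2k(k-1)\gamma\zeta^-_{k-2}$ for $k$ odd and $\zeta^-_{k+1}=\alpha\zeta^-_k+2k(k-1)\gamma\zeta^-_{k-2}$ for $k$ even ($k\geqslant0$); $J^-_k=(\zeta^-_k,\zeta^-_{k+1},\zeta^-_{k+2})$. A unit modulo an ideal $J$ is an element whose image in $\mathbb{C}[\alpha,\gamma]/J$ is invertible. *)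

theory Defs
  imports Complex_Main "HOL-Computational_Algebra.Polynomial"
begin

text \<open>C[alpha,gamma] is represented as (C[alpha])[gamma], i.e. complex poly poly.
  alpha is the inner variable, gamma the outer one.\<close>

type_synonym R2 = "complex poly poly"

definition alph :: R2 where "alph = [:[:0, 1:]:]"
definition gam :: R2 where "gam = [:0, 1:]"

text \<open>zeta^-_k for k >= 0; the recursion with zeta^-_i = 0 for i < 0 written out.\<close>
fun zeta_nat :: "nat \<Rightarrow> R2" where
  "zeta_nat 0 = 1"
| "zeta_nat (Suc 0) = alph * zeta_nat 0"
| "zeta_nat (Suc (Suc 0)) = alph * zeta_nat 1 - 16 * 1^2 * zeta_nat 0"
| "zeta_nat (Suc (Suc (Suc k))) =
     alph * zeta_nat (k + 2)
     - (if odd (k + 2) then 16 * of_nat ((k + 2)^2) * zeta_nat (k + 1) else 0)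
     + 2 * of_nat ((k + 2) * (k + 1)) * gam * zeta_nat k"

definition zeta :: "int \<Rightarrow> R2" where
  "zeta k = (if k < 0 then 0 else zeta_nat (nat k))"

definition Jm :: "int \<Rightarrow> R2 set" where
  "Jm k = {a * zeta k + b * zeta (k + 1) + c * zeta (k + 2) | a b c. True}"

definition cong_mod :: "R2 set \<Rightarrow> R2 \<Rightarrow> R2 \<Rightarrow> bool" where
  "cong_mod J x y \<longleftrightarrow> x - y \<in> J"

definition unit_mod :: "R2 set \<Rightarrow> R2 \<Rightarrow> bool" where
  "unit_mod J u \<longleftrightarrow> (\<exists>w. cong_mod J (u * w) 1)"

end

theory Submission
  imports Defs
    "HOL-Computational_Algebra.Fundamental_Theorem_Algebra"
    "HOL-Computational_Algebra.Polynomial_Factorial"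
    "HOL-Computational_Algebra.Field_as_Ring"
begin

text \<open>Write \<open>g = 2m + 1\<close> and \<open>J = J\<^sup>-\<^sub>g\<close>. Both sides of each congruence already lie in \<open>J\<close>,
  so \<open>u = v = 1\<close> will do. Read backwards, the recursion expresses \<open>2k(k - 1) \<gamma> \<zeta>(k - 2)\<close>
  through \<open>\<zeta>(k + 1)\<close>, \<open>\<zeta>(k)\<close> and, for odd \<open>k\<close>, \<open>\<zeta>(k - 1)\<close>. Hence once \<open>\<zeta>(2m)\<close>, \<open>\<zeta>(2m + 1)\<close>
  and \<open>\<zeta>(2m + 2)\<close> lie in \<open>J\<close>, a descent gives \<open>\<gamma>\<^sup>n \<zeta>(2m - 2n) \<in> J\<close> and \<open>\<gamma>\<^sup>n \<zeta>(2m - 2n + 1) \<in> J\<close>.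

  The real work is \<open>\<zeta>(2m) \<in> J\<close>, obtained from two coprime annihilators in \<open>\<complex>[\<alpha>]\<close>.
  First, \<open>\<gamma> \<zeta>(2m) \<in> J\<close>, so the \<open>\<gamma>\<close>-free part of \<open>\<alpha> \<zeta>(2m + 1) - \<zeta>(2m + 2) \<in> J\<close>, namely
  \<open>16(2m + 1)\<^sup>2 \<Prod>\<^bsub>l < m\<^esub> (\<alpha>\<^sup>2 - 16(2l + 1)\<^sup>2)\<close>, annihilates \<open>\<zeta>(2m)\<close> modulo \<open>J\<close>.
  Second, the combinations \<open>\<zeta>(2j + 1) \<plusminus> 4(2j + 1) \<zeta>(2j)\<close> satisfy first-order recursions with
  factors \<open>\<plusminus>4(2j + 3) - \<alpha>\<close>, up to multiples of \<open>\<zeta>(2j + 4)\<close>; telescoping them yields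
  \<open>(D + E) \<zeta>(2m) \<in> J\<close> with \<open>D = \<Prod>\<^bsub>l \<le> m\<^esub> (4(2l + 1) - \<alpha>)\<close> and \<open>E = \<Prod>\<^bsub>l \<le> m\<^esub> (-4(2l + 1) - \<alpha>)\<close>.
  At each root \<open>\<plusminus>4(2l + 1)\<close>, \<open>l < m\<close>, of the first annihilator exactly one of \<open>D\<close>, \<open>E\<close> vanishes.\<close>

lemma Jm_zero: "0 \<in> Jm k"
  unfolding Jm_def by (intro CollectI exI[of _ 0]) simp

lemma Jm_add:
  assumes "x \<in> Jm k" "y \<in> Jm k"
  shows "x + y \<in> Jm k"
proof -
  from assms obtain a b c a' b' c' where
    "x = a * zeta k + b * zeta (k + 1) + c * zeta (k + 2)"
    "y = a' * zeta k + b' * zeta (k + 1) + c' * zeta (k + 2)"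
    unfolding Jm_def by blast
  then have "x + y = (a + a') * zeta k + (b + b') * zeta (k + 1) + (c + c') * zeta (k + 2)"
    by (simp add: algebra_simps)
  then show ?thesis unfolding Jm_def by blast
qed

lemma Jm_mult:
  assumes "x \<in> Jm k"
  shows "r * x \<in> Jm k"
proof -
  from assms obtain a b c where "x = a * zeta k + b * zeta (k + 1) + c * zeta (k + 2)"
    unfolding Jm_def by blast
  then have "r * x = (r * a) * zeta k + (r * b) * zeta (k + 1) + (r * c) * zeta (k + 2)"
    by (simp add: algebra_simps)
  then show ?thesis unfolding Jm_def by blast
qed

lemma Jm_diff: "x \<in> Jm k \<Longrightarrow> y \<in> Jm k \<Longrightarrow> x - y \<in> Jm k"
  using Jm_add[of x k "(-1) * y"] Jm_mult[of y k "-1"] by simp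

lemma zeta_in_Jm: "zeta k \<in> Jm k" "zeta (k + 1) \<in> Jm k" "zeta (k + 2) \<in> Jm k"
  unfolding Jm_def by (intro CollectI exI[of _ 1] exI[of _ 0], simp)+

lemma Jm_cancel_of_int:
  assumes "of_int c * x \<in> Jm k" "c \<noteq> 0"
  shows "x \<in> Jm k"
proof -
  have "[:[:1 / of_int c:]:] * (of_int c * x) = x"
    using assms(2) by (simp add: of_int_poly mult.assoc[symmetric] one_pCons[symmetric])
  with Jm_mult[OF assms(1)] show ?thesis by metis
qed

lemma complex_poly_bezout_no_common_root:
  fixes p q :: "complex poly"
  assumes "q \<noteq> 0" and "\<And>z. poly q z = 0 \<Longrightarrow> poly p z \<noteq> 0"
  shows "\<exists>a b. a * p + b * q = 1"
proof -
  have "degree (gcd p q) = 0"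
  proof (rule ccontr)
    assume "degree (gcd p q) \<noteq> 0"
    then obtain z where "poly (gcd p q) z = 0"
      using fundamental_theorem_of_algebra constant_degree by metis
    then have "poly p z = 0" "poly q z = 0"
      by (meson dvd_trans gcd_dvd1 gcd_dvd2 poly_eq_0_iff_dvd)+
    with assms(2) show False by blast
  qed
  with assms(1) have "gcd p q = 1"
    by (metis coprime_iff_gcd_eq_1 gcd_eq_0_iff is_unit_gcd is_unit_iff_degree)
  then show ?thesis
    using bezout_coefficients_fst_snd[of p q] by metis
qed

lemma zeta_rec:
  assumes "k \<ge> 0"
  shows "zeta (k + 1) = alph * zeta k - of_int (if odd k then 16 * k^2 else 0) * zeta (k - 1)
           + of_int (2 * k * (k - 1)) * gam * zeta (k - 2)"
proof -
  have "k = 0 \<or> k = 1 \<or> k = int (nat (k - 2)) + 2"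
    using assms by linarith
  then consider "k = 0" | "k = 1" | n where "k = int n + 2"
    by blast
  then show ?thesis
  proof cases
    case 3
    then have "nat (k + 1) = Suc (Suc (Suc n))" "nat k = n + 2" "nat (k - 1) = n + 1" "nat (k - 2) = n"
      "(of_int (16 * k^2) :: R2) = 16 * of_nat ((n + 2)^2)"
      "(of_int (2 * k * (k - 1)) :: R2) = 2 * of_nat ((n + 2) * (n + 1))"
      by (simp_all add: algebra_simps)
    with 3 show ?thesis by (simp add: zeta_def)
  qed (simp_all add: zeta_def numeral_2_eq_2)
qed

lemma gam_zeta_in_Jm_step:
  assumes "G * zeta (k + 1) \<in> Jm g" "G * zeta k \<in> Jm g" "odd k \<Longrightarrow> G * zeta (k - 1) \<in> Jm g"
  shows "G * gam * zeta (k - 2) \<in> Jm g"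
proof (cases "k < 2")
  case True
  then show ?thesis by (simp add: zeta_def Jm_zero)
next
  case False
  then have "of_int (2 * k * (k - 1)) * (G * gam * zeta (k - 2)) =
      G * zeta (k + 1) - alph * (G * zeta k) + of_int (if odd k then 16 * k^2 else 0) * (G * zeta (k - 1))"
    by (simp only: zeta_rec) (simp add: algebra_simps)
  moreover have "of_int (if odd k then 16 * k^2 else 0) * (G * zeta (k - 1)) \<in> Jm g"
    using assms(3) by (cases "odd k") (simp_all add: Jm_mult Jm_zero)
  ultimately have "of_int (2 * k * (k - 1)) * (G * gam * zeta (k - 2)) \<in> Jm g"
    using assms(1,2) by (simp add: Jm_add Jm_diff Jm_mult)
  then show ?thesis
    by (rule Jm_cancel_of_int) (use False in simp)
qed

lemma gam_power_zeta_in_Jm_descent: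
  fixes m n d :: nat
  assumes "d \<le> 1"
    and "gam ^ d * zeta (2 * int m) \<in> Jm g"
    and "gam ^ d * zeta (2 * int m + 1) \<in> Jm g"
    and "zeta (2 * int m + 2) \<in> Jm g"
  shows "gam ^ (n + d) * zeta (2 * int m - 2 * int n) \<in> Jm g \<and>
         gam ^ (n + d) * zeta (2 * int m - 2 * int n + 1) \<in> Jm g \<and>
         gam ^ n * zeta (2 * int m - 2 * int n + 2) \<in> Jm g"
proof (induction n)
  case 0
  then show ?case using assms by simp
next
  case (Suc n)
  define t where "t = 2 * int m - 2 * int n"
  from Suc.IH have even: "gam ^ (n + d) * zeta t \<in> Jm g"
    and odd: "gam ^ (n + d) * zeta (t + 1) \<in> Jm g"
    and top: "gam ^ n * zeta (t + 2) \<in> Jm g"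
    by (simp_all add: t_def)
  have "gam ^ (n + d) * gam * zeta (t - 2) \<in> Jm g"
    using gam_zeta_in_Jm_step[OF odd even] by (simp add: t_def)
  moreover have "gam ^ (n + d) * gam * zeta (t + 1 - 2) \<in> Jm g"
  proof (rule gam_zeta_in_Jm_step)
    show "gam ^ (n + d) * zeta (t + 1 + 1) \<in> Jm g"
      using Jm_mult[OF top, of "gam ^ d"] by (simp add: power_add ac_simps)
  qed (use even odd in simp_all)
  moreover have "gam ^ Suc n * zeta t \<in> Jm g"
  proof -
    have "gam ^ Suc n = gam ^ (1 - d) * gam ^ (n + d)"
      using assms(1) by (simp flip: power_add)
    then show ?thesis
      using Jm_mult[OF even, of "gam ^ (1 - d)"] by (simp add: mult.assoc)
  qed
  ultimately show ?case
    by (simp add: t_def algebra_simps)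
qed

lemma zeta_odd_rec:
  "zeta (2 * int j + 3) = alph * zeta (2 * int j + 2) + of_nat (2 * (2 * j + 2) * (2 * j + 1)) * gam * zeta (2 * int j)"
  using zeta_rec[of "2 * int j + 2"] by (simp add: algebra_simps)

lemma zeta_even_rec:
  "zeta (2 * int j + 4) = alph * zeta (2 * int j + 3) - of_nat (16 * (2 * j + 3)^2) * zeta (2 * int j + 2)
     + of_nat (2 * (2 * j + 3) * (2 * j + 2)) * gam * zeta (2 * int j + 1)"
  using zeta_rec[of "2 * int j + 3"] by (simp add: algebra_simps)

lemma gam_zeta_even_in_Jm: "gam * zeta (2 * int m) \<in> Jm (2 * int m + 1)"
  using gam_zeta_in_Jm_step[of 1 "2 * int m + 2" "2 * int m + 1"] zeta_in_Jm[of "2 * int m + 1"]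
  by (simp add: add.assoc)

lemma gam_power_zeta_in_Jm: "gam ^ n * zeta (2 * int m - 2 * int n + 2) \<in> Jm (2 * int m + 1)"
  using gam_power_zeta_in_Jm_descent[of 1 m "2 * int m + 1" n] gam_zeta_even_in_Jm[of m]
    zeta_in_Jm[of "2 * int m + 1"] Jm_mult
  by (simp add: add.assoc)

definition zeta_plus :: "nat \<Rightarrow> R2" where
  "zeta_plus j = zeta (2 * int j + 1) + of_nat (4 * (2 * j + 1)) * zeta (2 * int j)"

definition zeta_minus :: "nat \<Rightarrow> R2" where
  "zeta_minus j = of_nat (4 * (2 * j + 1)) * zeta (2 * int j) - zeta (2 * int j + 1)"

lemma zeta_plus_Suc:
  "(of_nat (4 * (2 * j + 3)) - alph) * zeta_plus (Suc j)
     = of_nat (2 * (2 * j + 3) * (2 * j + 2)) * gam * zeta_plus j - zeta (2 * int j + 4)"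
proof -
  have idx: "2 * int (Suc j) = 2 * int j + 2" "2 * int j + 2 + 1 = 2 * int j + 3" by simp_all
  show ?thesis
    unfolding zeta_plus_def idx zeta_even_rec zeta_odd_rec by (simp add: algebra_simps power2_eq_square)
qed

lemma zeta_minus_Suc:
  "(- of_nat (4 * (2 * j + 3)) - alph) * zeta_minus (Suc j)
     = of_nat (2 * (2 * j + 3) * (2 * j + 2)) * gam * zeta_minus j + zeta (2 * int j + 4)"
proof -
  have idx: "2 * int (Suc j) = 2 * int j + 2" "2 * int j + 2 + 1 = 2 * int j + 3" by simp_all
  show ?thesis
    unfolding zeta_minus_def idx zeta_even_rec zeta_odd_rec by (simp add: algebra_simps power2_eq_square)
qed

definition pos_roots_poly :: "nat \<Rightarrow> complex poly" where
  "pos_roots_poly j = (\<Prod>l\<le>j. [:of_nat (4 * (2 * l + 1)), -1:])"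

definition neg_roots_poly :: "nat \<Rightarrow> complex poly" where
  "neg_roots_poly j = (\<Prod>l\<le>j. [:- of_nat (4 * (2 * l + 1)), -1:])"

lemma pos_roots_poly_Suc:
  "[:pos_roots_poly (Suc j):] = [:pos_roots_poly j:] * (of_nat (4 * (2 * j + 3)) - alph)"
  by (simp add: pos_roots_poly_def prod.atMost_Suc alph_def of_nat_poly algebra_simps)

lemma neg_roots_poly_Suc:
  "[:neg_roots_poly (Suc j):] = [:neg_roots_poly j:] * (- of_nat (4 * (2 * j + 3)) - alph)"
  by (simp add: neg_roots_poly_def prod.atMost_Suc alph_def of_nat_poly algebra_simps)

lemma roots_poly_combination_in_Jm:
  assumes "j \<le> m"
  shows "gam ^ (m - j) * ([:pos_roots_poly j:] * zeta_plus j + [:neg_roots_poly j:] * zeta_minus j)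
           \<in> Jm (2 * int m + 1)"
  using assms
proof (induction j)
  case 0
  have "[:pos_roots_poly 0:] * zeta_plus 0 + [:neg_roots_poly 0:] * zeta_minus 0 = 0"
    by (simp add: pos_roots_poly_def neg_roots_poly_def zeta_plus_def zeta_minus_def zeta_def
        alph_def numeral_poly algebra_simps)
  then show ?case by (simp add: Jm_zero)
next
  case (Suc j)
  define F where "F j = [:pos_roots_poly j:] * zeta_plus j + [:neg_roots_poly j:] * zeta_minus j" for j
  define c :: R2 where "c = of_nat (2 * (2 * j + 3) * (2 * j + 2))"
  define d where "d = [:neg_roots_poly j:] - [:pos_roots_poly j:]"
  have "F (Suc j) = c * gam * F j + d * zeta (2 * int j + 4)"
    unfolding F_def d_def pos_roots_poly_Suc neg_roots_poly_Suc mult.assoc zeta_plus_Suc zeta_minus_Suc c_def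
    by (simp add: algebra_simps smult_diff_left)
  moreover have "gam ^ (m - Suc j) * gam = gam ^ (m - j)"
    using Suc.prems by (simp flip: power_Suc2 add: Suc_diff_Suc)
  ultimately have "gam ^ (m - Suc j) * F (Suc j)
      = c * (gam ^ (m - j) * F j) + d * (gam ^ (m - Suc j) * zeta (2 * int j + 4))"
    by (simp add: algebra_simps)
  moreover have "gam ^ (m - Suc j) * zeta (2 * int j + 4) \<in> Jm (2 * int m + 1)"
    using gam_power_zeta_in_Jm[of "m - Suc j" m] Suc.prems by (simp add: of_nat_diff algebra_simps)
  moreover have "gam ^ (m - j) * F j \<in> Jm (2 * int m + 1)"
    using Suc by (simp add: F_def)
  ultimately show ?case
    unfolding F_def[symmetric] by (simp add: Jm_add Jm_mult)
qed

lemma roots_poly_sum_zeta_in_Jm: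
  "[:pos_roots_poly m + neg_roots_poly m:] * zeta (2 * int m) \<in> Jm (2 * int m + 1)"
proof -
  define D E where "D = [:pos_roots_poly m:]" and "E = [:neg_roots_poly m:]"
  have sum: "[:pos_roots_poly m + neg_roots_poly m:] = D + E"
    by (simp add: D_def E_def)
  have "of_int (4 * (2 * int m + 1)) * ([:pos_roots_poly m + neg_roots_poly m:] * zeta (2 * int m))
      = (D * zeta_plus m + E * zeta_minus m) - (D - E) * zeta (2 * int m + 1)"
    unfolding sum zeta_plus_def zeta_minus_def by (simp add: algebra_simps)
  moreover have "D * zeta_plus m + E * zeta_minus m \<in> Jm (2 * int m + 1)"
    using roots_poly_combination_in_Jm[of m m] by (simp add: D_def E_def)
  ultimately have "of_int (4 * (2 * int m + 1)) * ([:pos_roots_poly m + neg_roots_poly m:] * zeta (2 * int m))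
      \<in> Jm (2 * int m + 1)"
    using zeta_in_Jm(1) by (simp add: Jm_diff Jm_mult)
  then show ?thesis
    by (rule Jm_cancel_of_int) simp
qed

lemma Jm_coeff_0:
  assumes "x \<in> Jm k" "gam * e \<in> Jm k"
  shows "[:coeff x 0:] * e \<in> Jm k"
proof -
  obtain a q where x: "x = pCons a q" by (cases x)
  have "[:coeff x 0:] * e = x * e - q * (gam * e)"
    by (simp add: x gam_def algebra_simps)
  with assms show ?thesis
    by (metis Jm_diff Jm_mult mult.commute)
qed

definition sq_roots_poly :: "nat \<Rightarrow> complex poly" where
  "sq_roots_poly j = (\<Prod>l<j. [:- of_nat (16 * (2 * l + 1)^2), 0, 1:])"

lemma coeff_zeta_0:
  "coeff (zeta (2 * int j)) 0 = sq_roots_poly j \<and> coeff (zeta (2 * int j + 1)) 0 = [:0, 1:] * sq_roots_poly j"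
proof (induction j)
  case 0
  then show ?case by (simp add: sq_roots_poly_def zeta_def alph_def)
next
  case (Suc j)
  have "zeta (2 * int j + 2) = alph * zeta (2 * int j + 1) - of_nat (16 * (2 * j + 1)^2) * zeta (2 * int j)
      + of_nat (2 * (2 * j + 1) * (2 * j)) * gam * zeta (2 * int j - 1)"
    using zeta_rec[of "2 * int j + 1"] by (simp add: algebra_simps)
  then have "coeff (zeta (2 * int j + 2)) 0 = [:0, 1:] * ([:0, 1:] * sq_roots_poly j)
      - of_nat (16 * (2 * j + 1)^2) * sq_roots_poly j"
    using Suc.IH by (simp add: coeff_mult_0 alph_def gam_def of_nat_poly)
  also have "\<dots> = sq_roots_poly (Suc j)"
    by (simp add: sq_roots_poly_def of_nat_poly algebra_simps)
  finally have "coeff (zeta (2 * int (Suc j))) 0 = sq_roots_poly (Suc j)"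
    by (simp add: add.commute)
  moreover have "coeff (zeta (2 * int (Suc j) + 1)) 0 = [:0, 1:] * coeff (zeta (2 * int (Suc j))) 0"
    using zeta_odd_rec[of j] by (simp add: coeff_mult_0 alph_def gam_def add.commute)
  ultimately show ?case by simp
qed

lemma poly_sq_roots_poly_eq_0:
  assumes "poly (sq_roots_poly m) z = 0"
  obtains l where "l < m" "z = of_nat (4 * (2 * l + 1)) \<or> z = - of_nat (4 * (2 * l + 1))"
proof -
  obtain l where l: "l < m" "poly [:- of_nat (16 * (2 * l + 1)^2), 0, 1:] z = 0"
    using assms by (auto simp: sq_roots_poly_def poly_prod prod_zero_iff)
  define c :: complex where "c = of_nat (4 * (2 * l + 1))"
  have "(z - c) * (z + c) = 0"
    using l(2) by (simp add: c_def algebra_simps power2_eq_square)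
  then have "z = c \<or> z = - c"
    by (simp add: eq_neg_iff_add_eq_0)
  then show thesis
    using that[OF l(1)] unfolding c_def by blast
qed

lemma poly_roots_poly_sum_nonzero:
  assumes "l < m" "z = of_nat (4 * (2 * l + 1)) \<or> z = - of_nat (4 * (2 * l + 1))"
  shows "poly (pos_roots_poly m + neg_roots_poly m) z \<noteq> 0"
proof -
  define a :: "nat \<Rightarrow> complex" where "a l = of_nat (4 * (2 * l + 1))" for l
  have a_add: "a l' + a l \<noteq> 0" for l'
    unfolding a_def by (simp only: of_nat_add[symmetric] of_nat_eq_0_iff) simp
  then have a_neg_diff: "- a l' - a l \<noteq> 0" for l'
    by (metis minus_add_distrib neg_equal_0_iff_equal diff_conv_add_uminus)
  have pos: "poly (pos_roots_poly m) z = (\<Prod>l'\<le>m. a l' - z)"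
    and neg: "poly (neg_roots_poly m) z = (\<Prod>l'\<le>m. - a l' - z)"
    by (simp_all add: pos_roots_poly_def neg_roots_poly_def poly_prod a_def)
  from assms(2) consider "z = a l" | "z = - a l"
    unfolding a_def by blast
  then show ?thesis
  proof cases
    case 1
    then have "poly (pos_roots_poly m) z = 0" "poly (neg_roots_poly m) z \<noteq> 0"
      unfolding pos neg using assms(1) a_neg_diff by (auto simp: prod_zero_iff)
    then show ?thesis by simp
  next
    case 2
    then have "poly (pos_roots_poly m) z \<noteq> 0" "poly (neg_roots_poly m) z = 0"
      unfolding pos neg using assms(1) a_add by (auto simp: prod_zero_iff)
    then show ?thesis by simp
  qed
qed

lemma zeta_even_in_Jm: "zeta (2 * int m) \<in> Jm (2 * int m + 1)"
proof -
  define q where "q = smult (of_nat (16 * (2 * m + 1)^2)) (sq_roots_poly m)"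
  have "alph * zeta (2 * int m + 1) - zeta (2 * int m + 2) \<in> Jm (2 * int m + 1)"
    using zeta_in_Jm[of "2 * int m + 1"] by (simp add: Jm_diff Jm_mult add.assoc)
  moreover have "coeff (alph * zeta (2 * int m + 1) - zeta (2 * int m + 2)) 0 = q"
    using coeff_zeta_0[of m] coeff_zeta_0[of "Suc m"]
    by (simp add: q_def coeff_mult_0 alph_def sq_roots_poly_def of_nat_poly algebra_simps)
  ultimately have q_zeta: "[:q:] * zeta (2 * int m) \<in> Jm (2 * int m + 1)"
    using Jm_coeff_0 gam_zeta_even_in_Jm by metis
  have c_ne_0: "(of_nat (16 * (2 * m + 1)^2) :: complex) \<noteq> 0"
    by (simp only: of_nat_eq_0_iff) simp
  then have "q \<noteq> 0"
    by (simp add: q_def sq_roots_poly_def)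
  moreover have "poly (pos_roots_poly m + neg_roots_poly m) z \<noteq> 0" if "poly q z = 0" for z
  proof -
    have "poly (sq_roots_poly m) z = 0"
      using that c_ne_0 by (simp add: q_def)
    then obtain l where "l < m" "z = of_nat (4 * (2 * l + 1)) \<or> z = - of_nat (4 * (2 * l + 1))"
      by (rule poly_sq_roots_poly_eq_0)
    then show ?thesis
      by (rule poly_roots_poly_sum_nonzero)
  qed
  ultimately obtain a b where bezout: "a * (pos_roots_poly m + neg_roots_poly m) + b * q = 1"
    using complex_poly_bezout_no_common_root by blast
  have "zeta (2 * int m) = [:a * (pos_roots_poly m + neg_roots_poly m) + b * q:] * zeta (2 * int m)"
    by (simp add: bezout)
  also have "\<dots> = [:a:] * ([:pos_roots_poly m + neg_roots_poly m:] * zeta (2 * int m))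
      + [:b:] * ([:q:] * zeta (2 * int m))"
    by (simp add: smult_add_left smult_add_right algebra_simps)
  finally show ?thesis
    using roots_poly_sum_zeta_in_Jm q_zeta by (metis Jm_add Jm_mult)
qed

lemma gam_power_zeta_in_Jm_odd:
  fixes g n :: nat
  assumes "odd g"
  shows "gam ^ n * zeta (int g - 2 * int n - 1) \<in> Jm (int g)"
    and "gam ^ n * zeta (int g - 2 * int n) \<in> Jm (int g)"
proof -
  obtain m where g: "int g = 2 * int m + 1"
    using assms by (auto elim: oddE)
  have "gam ^ n * zeta (2 * int m - 2 * int n) \<in> Jm (int g) \<and>
        gam ^ n * zeta (2 * int m - 2 * int n + 1) \<in> Jm (int g)"
    using gam_power_zeta_in_Jm_descent[of 0 m "int g" n] zeta_even_in_Jm[of m] zeta_in_Jm[of "int g"]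
    unfolding g by (simp add: add.assoc)
  then show "gam ^ n * zeta (int g - 2 * int n - 1) \<in> Jm (int g)"
    and "gam ^ n * zeta (int g - 2 * int n) \<in> Jm (int g)"
    unfolding g by (simp_all add: algebra_simps)
qed

theorem lemma5p4:
  fixes g i :: nat
  assumes "g \<ge> 1" and "odd g"
  shows "(\<exists>u. unit_mod (Jm (int g)) u \<and>
            cong_mod (Jm (int g)) (u * gam ^ i * zeta (int g - 2 * int i - 1))
                                  (gam ^ (i + 1) * zeta (int g - 2 * int i - 2)))
       \<and> (\<exists>v. unit_mod (Jm (int g)) v \<and>
            cong_mod (Jm (int g)) (v * gam ^ i * zeta (int g - 2 * int i - 1))
                                  (gam ^ (i + 1) * zeta (int g - 2 * int i - 3)))"
proof -
  have "unit_mod (Jm (int g)) 1"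
    unfolding unit_mod_def cong_mod_def using Jm_zero by (intro exI[of _ 1]) simp
  moreover have "gam ^ i * zeta (int g - 2 * int i - 1) \<in> Jm (int g)"
    using gam_power_zeta_in_Jm_odd(1)[OF assms(2)] .
  moreover have "gam ^ (i + 1) * zeta (int g - 2 * int i - 2) \<in> Jm (int g)"
    using gam_power_zeta_in_Jm_odd(2)[OF assms(2), of "i + 1"] by (simp add: algebra_simps)
  moreover have "gam ^ (i + 1) * zeta (int g - 2 * int i - 3) \<in> Jm (int g)"
    using gam_power_zeta_in_Jm_odd(1)[OF assms(2), of "i + 1"] by (simp add: algebra_simps)
  ultimately show ?thesis
    unfolding cong_mod_def by (auto intro!: exI[of _ 1] Jm_diff)
qed

end
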